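(* Let $T$ be a tree with $ex(T)\ge1$, and let $g:V(T)\rightarrow [0,1]$ be any minimum resolving function of $T$. If $x$ is a major vertex, an interior degree-two vertex, or a vertex belonging to $T_v$ for some $v\in M_1(T)$, then $g(x)=0$.
   Context: $d(x,y)$ is the distance in the tree. For a function $g$ on $V(T)$ and $U\subseteq V(T)$, $g(U)=\sum_{s\in U}g(s)$. $R\{x,y\}=\{z: d(x,z)\ne d(y,z)\}$; $g:V(T)\to[0,1]$ is a resolving function if $g(R\{x,y\})\ge1$ for all distinct $x,y$; $\dim_f(T)$ is the minimum of $g(V(T))$ over resolving functions, and a minimum resolving function attains it. A leaf has degree one; a major vertex has degree at least three. A leaf $\ell$ is a terminal vertex of a major vertex $v$ if $d(\ell,v)<d(\ell,w)$ for every other major vertex $w$; $ter(v)$ is the number of terminal vertices of $v$; an exterior major vertex is a major vertex with $ter(v)>0$. $M(T)$ is the set of exterior major vertices, $ex(T)=|M(T)|$, $M_1(T)=\{w\in M(T): ter(w)=1\}$. For $v\in M(T)$, $T_v$ is the subtree induced by $v$ and all vertices on the paths joining $v$ to its terminal vertices. An interior degree-two vertex is a vertex of degree $2$ such that the shortest path from it to any terminal vertex includes a major vertex. *)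

theory Defs
  imports "HOL-Analysis.Analysis"
begin

definition walk :: "'a set \<Rightarrow> ('a \<Rightarrow> 'a \<Rightarrow> bool) \<Rightarrow> 'a list \<Rightarrow> bool" where
  "walk V E xs \<longleftrightarrow> xs \<noteq> [] \<and> set xs \<subseteq> V \<and>
     (\<forall>i. Suc i < length xs \<longrightarrow> E (xs ! i) (xs ! Suc i))"

definition path :: "'a set \<Rightarrow> ('a \<Rightarrow> 'a \<Rightarrow> bool) \<Rightarrow> 'a \<Rightarrow> 'a \<Rightarrow> 'a list \<Rightarrow> bool" where
  "path V E u v xs \<longleftrightarrow> walk V E xs \<and> distinct xs \<and> hd xs = u \<and> last xs = v"

definition connected_graph :: "'a set \<Rightarrow> ('a \<Rightarrow> 'a \<Rightarrow> bool) \<Rightarrow> bool" where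
  "connected_graph V E \<longleftrightarrow> (\<forall>u\<in>V. \<forall>v\<in>V. \<exists>xs. path V E u v xs)"

definition acyclic_graph :: "'a set \<Rightarrow> ('a \<Rightarrow> 'a \<Rightarrow> bool) \<Rightarrow> bool" where
  "acyclic_graph V E \<longleftrightarrow> \<not> (\<exists>xs. walk V E xs \<and> distinct xs \<and> length xs \<ge> 3 \<and> E (last xs) (hd xs))"

definition is_tree :: "'a set \<Rightarrow> ('a \<Rightarrow> 'a \<Rightarrow> bool) \<Rightarrow> bool" where
  "is_tree V E \<longleftrightarrow> finite V \<and> V \<noteq> {} \<and>
     (\<forall>u v. E u v \<longrightarrow> u \<in> V \<and> v \<in> V) \<and>
     (\<forall>u v. E u v \<longrightarrow> E v u) \<and> (\<forall>u. \<not> E u u) \<and>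
     connected_graph V E \<and> acyclic_graph V E"

definition dist_g :: "'a set \<Rightarrow> ('a \<Rightarrow> 'a \<Rightarrow> bool) \<Rightarrow> 'a \<Rightarrow> 'a \<Rightarrow> nat" where
  "dist_g V E x y = (LEAST n. \<exists>xs. walk V E xs \<and> hd xs = x \<and> last xs = y \<and> length xs = Suc n)"

definition degree :: "'a set \<Rightarrow> ('a \<Rightarrow> 'a \<Rightarrow> bool) \<Rightarrow> 'a \<Rightarrow> nat" where
  "degree V E v = card {w \<in> V. E v w}"

definition leaf :: "'a set \<Rightarrow> ('a \<Rightarrow> 'a \<Rightarrow> bool) \<Rightarrow> 'a \<Rightarrow> bool" where
  "leaf V E v \<longleftrightarrow> v \<in> V \<and> degree V E v = 1"

definition major :: "'a set \<Rightarrow> ('a \<Rightarrow> 'a \<Rightarrow> bool) \<Rightarrow> 'a \<Rightarrow> bool" where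
  "major V E v \<longleftrightarrow> v \<in> V \<and> degree V E v \<ge> 3"

definition terminal_of :: "'a set \<Rightarrow> ('a \<Rightarrow> 'a \<Rightarrow> bool) \<Rightarrow> 'a \<Rightarrow> 'a \<Rightarrow> bool" where
  "terminal_of V E v l \<longleftrightarrow> major V E v \<and> leaf V E l \<and>
     (\<forall>w. major V E w \<and> w \<noteq> v \<longrightarrow> dist_g V E l v < dist_g V E l w)"

definition ter :: "'a set \<Rightarrow> ('a \<Rightarrow> 'a \<Rightarrow> bool) \<Rightarrow> 'a \<Rightarrow> nat" where
  "ter V E v = card {l. terminal_of V E v l}"

definition ext_major :: "'a set \<Rightarrow> ('a \<Rightarrow> 'a \<Rightarrow> bool) \<Rightarrow> 'a set" where
  "ext_major V E = {v. major V E v \<and> ter V E v > 0}"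

definition ex_num :: "'a set \<Rightarrow> ('a \<Rightarrow> 'a \<Rightarrow> bool) \<Rightarrow> nat" where
  "ex_num V E = card (ext_major V E)"

definition M1 :: "'a set \<Rightarrow> ('a \<Rightarrow> 'a \<Rightarrow> bool) \<Rightarrow> 'a set" where
  "M1 V E = {w \<in> ext_major V E. ter V E w = 1}"

definition T_sub :: "'a set \<Rightarrow> ('a \<Rightarrow> 'a \<Rightarrow> bool) \<Rightarrow> 'a \<Rightarrow> 'a set" where
  "T_sub V E v = {v} \<union> {z. \<exists>l xs. terminal_of V E v l \<and> path V E v l xs \<and> z \<in> set xs}"

definition interior_deg2 :: "'a set \<Rightarrow> ('a \<Rightarrow> 'a \<Rightarrow> bool) \<Rightarrow> 'a \<Rightarrow> bool" where
  "interior_deg2 V E x \<longleftrightarrow> x \<in> V \<and> degree V E x = 2 \<and>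
     (\<forall>v l xs. terminal_of V E v l \<and> path V E x l xs \<and> length xs = Suc (dist_g V E x l)
        \<longrightarrow> (\<exists>z\<in>set xs. major V E z))"

definition resolving_set :: "'a set \<Rightarrow> ('a \<Rightarrow> 'a \<Rightarrow> bool) \<Rightarrow> 'a \<Rightarrow> 'a \<Rightarrow> 'a set" where
  "resolving_set V E x y = {z \<in> V. dist_g V E x z \<noteq> dist_g V E y z}"

definition resolving_function :: "'a set \<Rightarrow> ('a \<Rightarrow> 'a \<Rightarrow> bool) \<Rightarrow> ('a \<Rightarrow> real) \<Rightarrow> bool" where
  "resolving_function V E g \<longleftrightarrow> (\<forall>v\<in>V. 0 \<le> g v \<and> g v \<le> 1) \<and>
     (\<forall>x\<in>V. \<forall>y\<in>V. x \<noteq> y \<longrightarrow> sum g (resolving_set V E x y) \<ge> 1)"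

definition frac_dim :: "'a set \<Rightarrow> ('a \<Rightarrow> 'a \<Rightarrow> bool) \<Rightarrow> real" where
  "frac_dim V E = Inf {sum g V | g. resolving_function V E g}"

definition min_resolving_function :: "'a set \<Rightarrow> ('a \<Rightarrow> 'a \<Rightarrow> bool) \<Rightarrow> ('a \<Rightarrow> real) \<Rightarrow> bool" where
  "min_resolving_function V E g \<longleftrightarrow> resolving_function V E g \<and> sum g V = frac_dim V E"

end

(*
  Call a neighbour a of a major vertex v a leg of v if the branch of T - v at a contains no major
  vertex; such a branch is a path ending in a terminal vertex of v. Let A be the set of first
  vertices of the legs of the major vertices having at least two legs, and U the union of these
  legs.

  Weight 1/2 on every vertex of A is a resolving function, so dim_f(T) <= |A|/2: for x ~= y the
  two branches at the middle of a geodesic from x to y consist of vertices resolving x and y, and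
  either one of them contains a major vertex, and then two vertices of A, or the middle of the
  geodesic is a major vertex with two legs inside these branches. Conversely, two legs a, a' of
  the same vertex are resolved only by vertices of these two legs, so every resolving function
  has weight at least |A|/2 on U. Hence a minimum resolving function vanishes outside U, and
  major vertices, interior degree-two vertices and the vertices of T_v for v in M_1(T) all lie
  outside U.
*)

theory Submission
  imports Defs
begin

lemma walk_singleton [simp]: "walk V E [x] \<longleftrightarrow> x \<in> V"
  by (auto simp: walk_def)

lemma walk_Nil [simp]: "\<not> walk V E []"
  by (simp add: walk_def)

lemma walk_Cons_Cons: "walk V E (x # y # xs) \<longleftrightarrow> x \<in> V \<and> E x y \<and> walk V E (y # xs)"
  by (auto simp: walk_def nth_Cons split: nat.splits)

lemma walk_append:
  "walk V E xs \<Longrightarrow> walk V E ys \<Longrightarrow> E (last xs) (hd ys) \<Longrightarrow> walk V E (xs @ ys)"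
proof (induction xs rule: induct_list012)
  case (2 x)
  then show ?case by (cases ys) (auto simp: walk_Cons_Cons)
next
  case (3 x y zs)
  then show ?case by (auto simp: walk_Cons_Cons)
qed simp

lemma walk_append_tl:
  assumes "walk V E xs" "walk V E ys" "last xs = hd ys"
  shows "walk V E (xs @ tl ys)"
proof (cases ys rule: remdups_adj.cases)
  case (3 y z zs)
  then show ?thesis using assms walk_append[of V E xs "z # zs"] by (auto simp: walk_Cons_Cons)
qed (use assms in auto)

lemma walk_take: "walk V E xs \<Longrightarrow> 0 < n \<Longrightarrow> walk V E (take n xs)"
  unfolding walk_def by (auto dest: in_set_takeD)

lemma walk_drop: "walk V E xs \<Longrightarrow> n < length xs \<Longrightarrow> walk V E (drop n xs)"
  unfolding walk_def by (auto dest: in_set_dropD)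

lemma walk_rev:
  assumes sym: "\<And>u v. E u v \<Longrightarrow> E v u" and "walk V E xs"
  shows "walk V E (rev xs)"
  unfolding walk_def
proof (intro conjI allI impI)
  fix i assume i: "Suc i < length (rev xs)"
  define j where "j = length xs - Suc (Suc i)"
  have "E (xs ! j) (xs ! Suc j)" using assms i by (simp add: walk_def j_def)
  moreover have "rev xs ! i = xs ! Suc j" "rev xs ! Suc i = xs ! j" using i
    by (auto simp: rev_nth j_def Suc_diff_Suc)
  ultimately show "E (rev xs ! i) (rev xs ! Suc i)" using sym by simp
qed (use assms in \<open>auto simp: walk_def\<close>)

lemma dist_g_le_walk_length:
  assumes "walk V E xs" "hd xs = x" "last xs = y"
  shows "dist_g V E x y \<le> length xs - 1"
proof -
  have "length xs = Suc (length xs - 1)" using assms by (cases xs) auto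
  then show ?thesis unfolding dist_g_def using assms by (intro Least_le) blast
qed

lemma list_crossing:
  assumes "xs \<noteq> []" "\<not> P (hd xs)" "P (last xs)"
  obtains i where "Suc i < length xs" "\<not> P (xs ! i)" "P (xs ! Suc i)"
  using assms
proof (induction xs rule: induct_list012)
  case (3 x y zs)
  show ?case
  proof (cases "P y")
    case True
    then show ?thesis using "3.prems"(1)[of 0] "3.prems"(3) by simp
  next
    case False
    show ?thesis
    proof (rule "3.IH"(2))
      fix i assume "Suc i < length (y # zs)" "\<not> P ((y # zs) ! i)" "P ((y # zs) ! Suc i)"
      then show thesis using "3.prems"(1)[of "Suc i"] by simp
    qed (use False "3.prems"(4) in auto)
  qed
qed auto

lemma finite_obtain_maximizer:
  fixes f :: "'a \<Rightarrow> 'b::linorder"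
  assumes "finite S" "S \<noteq> {}"
  obtains x where "x \<in> S" "\<And>y. y \<in> S \<Longrightarrow> f y \<le> f x"
proof -
  have "Max (f ` S) \<in> f ` S" using assms by (intro Max_in) auto
  then obtain x where x: "Max (f ` S) = f x" "x \<in> S" by (rule imageE)
  have "f y \<le> Max (f ` S)" if "y \<in> S" for y
    using assms(1) that by simp
  with x show ?thesis using that by simp
qed

lemma two_le_card_iff:
  assumes "finite S"
  shows "2 \<le> card S \<longleftrightarrow> (\<exists>x\<in>S. \<exists>y\<in>S. x \<noteq> y)"
proof
  assume "2 \<le> card S"
  then show "\<exists>x\<in>S. \<exists>y\<in>S. x \<noteq> y" using card_le_Suc0_iff_eq[OF assms] by auto
next
  assume "\<exists>x\<in>S. \<exists>y\<in>S. x \<noteq> y"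
  then obtain x y where "x \<in> S" "y \<in> S" "x \<noteq> y" by blast
  then have "card {x, y} \<le> card S" using assms by (intro card_mono) auto
  then show "2 \<le> card S" using \<open>x \<noteq> y\<close> by simp
qed

lemma frac_dim_le_sum: "resolving_function V E g \<Longrightarrow> frac_dim V E \<le> sum g V"
  unfolding frac_dim_def
proof (rule cInf_lower)
  show "bdd_below {sum g V |g. resolving_function V E g}"
    by (rule bdd_belowI[of _ 0]) (auto simp: resolving_function_def intro: sum_nonneg)
qed blast

lemma half_card_le_sum:
  fixes s :: "'a \<Rightarrow> real"
  assumes fin: "finite I" and two: "2 \<le> card I"
    and pairs: "\<And>i j. i \<in> I \<Longrightarrow> j \<in> I \<Longrightarrow> i \<noteq> j \<Longrightarrow> 1 \<le> s i + s j"
  shows "card I / 2 \<le> sum s I"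
proof (cases "\<forall>i\<in>I. 1 / 2 \<le> s i")
  case True
  then have "card I * (1 / 2) \<le> sum s I" by (intro sum_bounded_below) auto
  then show ?thesis by simp
next
  case False
  then obtain i where i: "i \<in> I" "s i < 1 / 2" by auto
  have "1 - s i \<le> s j" if "j \<in> I - {i}" for j
    using pairs[OF i(1), of j] that by auto
  then have "card (I - {i}) * (1 - s i) \<le> sum s (I - {i})" by (rule sum_bounded_below)
  moreover have "card (I - {i}) = card I - 1" "sum s I = s i + sum s (I - {i})"
    using i fin by (simp_all add: sum.remove)
  ultimately have "s i + (real (card I) - 1) * (1 - s i) \<le> sum s I"
    using two by (simp add: of_nat_diff)
  moreover have "0 \<le> (real (card I) - 2) * (1 / 2 - s i)"
    using two i by (intro mult_nonneg_nonneg) auto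
  ultimately show ?thesis by (simp add: algebra_simps)
qed

locale sym_connected_graph =
  fixes V :: "'a set" and E :: "'a \<Rightarrow> 'a \<Rightarrow> bool"
  assumes edge_vertices: "E u v \<Longrightarrow> u \<in> V \<and> v \<in> V"
    and edge_sym: "E u v \<Longrightarrow> E v u"
    and edge_irrefl: "\<not> E u u"
    and connected: "connected_graph V E"
begin

abbreviation d :: "'a \<Rightarrow> 'a \<Rightarrow> nat" where
  "d \<equiv> dist_g V E"

definition geodesic :: "'a list \<Rightarrow> 'a \<Rightarrow> 'a \<Rightarrow> bool" where
  "geodesic xs x y \<longleftrightarrow> walk V E xs \<and> hd xs = x \<and> last xs = y \<and> length xs = Suc (d x y)"

lemma geodesicD:
  assumes "geodesic xs x y"
  shows "walk V E xs" "xs \<noteq> []" "hd xs = x" "last xs = y" "set xs \<subseteq> V"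
    "length xs = Suc (d x y)"
  using assms by (auto simp: geodesic_def walk_def)

lemma geodesic_exists:
  assumes "x \<in> V" "y \<in> V"
  obtains xs where "geodesic xs x y"
proof -
  obtain xs where "path V E x y xs" using assms connected by (auto simp: connected_graph_def)
  then have "\<exists>n xs. walk V E xs \<and> hd xs = x \<and> last xs = y \<and> length xs = Suc n"
    unfolding path_def by (metis Suc_pred length_greater_0_conv walk_def)
  then have "\<exists>xs. geodesic xs x y" unfolding geodesic_def dist_g_def by (rule LeastI_ex)
  then show ?thesis using that by blast
qed

lemma dist_self: "x \<in> V \<Longrightarrow> d x x = 0"
  using dist_g_le_walk_length[of V E "[x]"] by simp

lemma dist_triangle:
  assumes "x \<in> V" "y \<in> V" "z \<in> V"
  shows "d x z \<le> d x y + d y z"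
proof -
  obtain xs where xs: "geodesic xs x y" using geodesic_exists assms by blast
  obtain ys where ys: "geodesic ys y z" using geodesic_exists assms by blast
  have "walk V E (xs @ tl ys)"
    using walk_append_tl geodesicD[OF xs] geodesicD[OF ys] by metis
  moreover have "hd (xs @ tl ys) = x" "last (xs @ tl ys) = z"
    using geodesicD[OF xs] geodesicD[OF ys] by (auto simp: neq_Nil_conv)
  ultimately have "d x z \<le> length (xs @ tl ys) - 1" by (rule dist_g_le_walk_length)
  then show ?thesis using geodesicD(6)[OF xs] geodesicD(6)[OF ys] by simp
qed

lemma dist_sym:
  assumes "x \<in> V" "y \<in> V"
  shows "d x y = d y x"
proof -
  have "d y x \<le> d x y" if xy: "x \<in> V" "y \<in> V" for x y
  proof -
    obtain xs where xs: "geodesic xs x y" using geodesic_exists[OF xy] .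
    have "d y x \<le> length (rev xs) - 1" using geodesicD[OF xs]
      by (intro dist_g_le_walk_length walk_rev[OF edge_sym]) (auto simp: hd_rev last_rev)
    then show ?thesis using geodesicD(6)[OF xs] by simp
  qed
  then show ?thesis using assms by (meson antisym)
qed

lemma dist_eq_0_iff:
  assumes "x \<in> V" "y \<in> V"
  shows "d x y = 0 \<longleftrightarrow> x = y"
proof
  assume "d x y = 0"
  moreover obtain xs where "geodesic xs x y" using geodesic_exists assms by blast
  ultimately show "x = y" using geodesicD[of xs x y] by (auto simp: length_Suc_conv)
qed (use assms dist_self in simp)

lemma dist_eq_1_iff:
  assumes "x \<in> V" "y \<in> V"
  shows "d x y = 1 \<longleftrightarrow> E x y"
proof
  assume "d x y = 1"
  moreover obtain xs where "geodesic xs x y" using geodesic_exists assms by blast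
  ultimately show "E x y" using geodesicD[of xs x y] by (auto simp: length_Suc_conv walk_Cons_Cons)
next
  assume e: "E x y"
  then have "d x y \<le> 1"
    using dist_g_le_walk_length[of V E "[x, y]"] assms by (simp add: walk_Cons_Cons)
  moreover have "x \<noteq> y" using e edge_irrefl by blast
  ultimately show "d x y = 1" using dist_eq_0_iff assms by fastforce
qed

lemma dist_edge: "E x y \<Longrightarrow> d x y = 1"
  using dist_eq_1_iff edge_vertices by blast

lemma geodesic_nth:
  assumes g: "geodesic xs x y" and i: "i < length xs"
  shows "d x (xs ! i) = i" "d (xs ! i) y = d x y - i"
proof -
  note xs = geodesicD[OF g]
  have "last (take (Suc i) xs) = xs ! i" using i by (simp add: take_Suc_conv_app_nth)
  then have "d x (xs ! i) \<le> length (take (Suc i) xs) - 1"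
    using walk_take[OF xs(1), of "Suc i"] xs(3) by (intro dist_g_le_walk_length) auto
  moreover have "d (xs ! i) y \<le> length (drop i xs) - 1"
    using walk_drop[OF xs(1) i] xs(4) i
      by (intro dist_g_le_walk_length) (auto simp: hd_drop_conv_nth)
  moreover have "d x y \<le> d x (xs ! i) + d (xs ! i) y"
    using dist_triangle xs(2-5) i by (metis hd_in_set last_in_set nth_mem subsetD)
  ultimately show "d x (xs ! i) = i" "d (xs ! i) y = d x y - i" using xs(6) i by auto
qed

lemma geodesic_distinct:
  assumes "geodesic xs x y"
  shows "distinct xs"
  unfolding distinct_conv_nth
proof (intro allI impI)
  fix i j assume "i < length xs" "j < length xs" "i \<noteq> j"
  then show "xs ! i \<noteq> xs ! j" using geodesic_nth(1)[OF assms] by metis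
qed

lemma geodesic_dist_split:
  assumes g: "geodesic xs x y" and p: "p \<in> set xs"
  shows "d x p + d p y = d x y"
proof -
  obtain i where "i < length xs" "p = xs ! i" using p by (auto simp: in_set_conv_nth)
  then show ?thesis using geodesic_nth[OF g] geodesicD(6)[OF g] by simp
qed

end

locale tree_graph = sym_connected_graph +
  assumes finite_V: "finite V"
    and acyclic: "acyclic_graph V E"
begin

lemma no_cycle: "walk V E xs \<Longrightarrow> distinct xs \<Longrightarrow> 3 \<le> length xs \<Longrightarrow> \<not> E (last xs) (hd xs)"
  using acyclic by (auto simp: acyclic_graph_def)

(* For an edge c a, branch c a is the vertex set of the component of T - c containing a. *)
definition branch :: "'a \<Rightarrow> 'a \<Rightarrow> 'a set" where
  "branch c a = {z \<in> V. d a z < d c z}"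

lemma branch_subset: "branch c a \<subseteq> V"
  by (auto simp: branch_def)

lemma finite_branch: "finite (branch c a)"
  using finite_subset[OF branch_subset finite_V] .

lemma branch_root_mem: "E c a \<Longrightarrow> a \<in> branch c a"
  using dist_edge dist_self edge_vertices by (auto simp: branch_def)

lemma branch_base_not_mem: "E c a \<Longrightarrow> c \<notin> branch c a"
  using dist_edge dist_self edge_vertices by (auto simp: branch_def)

(* Otherwise a geodesic from a to u, which stays in the branch, and a geodesic from u' to c,
   which stays outside, close up to a cycle through the edges u u' and c a. *)
lemma edge_leaving_branch:
  assumes ca: "E c a" and u: "u \<in> branch c a" and u': "u' \<in> V" "u' \<notin> branch c a"
    and uu': "E u u'"
  shows "u = a \<and> u' = c"
proof -
  have V: "a \<in> V" "c \<in> V" "u \<in> V" using ca edge_vertices u branch_subset by blast+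
  obtain ps where ps: "geodesic ps a u" using geodesic_exists V by blast
  obtain qs where qs: "geodesic qs u' c" using geodesic_exists V u' by blast
  have ps_in: "d a p < d c p" if "p \<in> set ps" for p
  proof -
    have "p \<in> V" using that geodesicD(5)[OF ps] by auto
    then have "d c u \<le> d c p + d p u" using dist_triangle V by blast
    moreover have "d a u < d c u" using u by (simp add: branch_def)
    ultimately show ?thesis using geodesic_dist_split[OF ps that] by linarith
  qed
  have qs_out: "d c q \<le> d a q" if "q \<in> set qs" for q
  proof -
    have q: "q \<in> V" using that geodesicD(5)[OF qs] by auto
    then have "d a u' \<le> d a q + d q u'" using dist_triangle V u' by blast
    moreover have "d c u' \<le> d a u'" using u' by (simp add: branch_def)
    ultimately show ?thesis using geodesic_dist_split[OF qs that] dist_sym V q u' by simp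
  qed
  have "set ps \<inter> set qs = {}" using ps_in qs_out by fastforce
  then have "distinct (ps @ qs)" using geodesic_distinct ps qs by simp
  moreover have "walk V E (ps @ qs)"
    using geodesicD[OF ps] geodesicD[OF qs] uu' by (intro walk_append) auto
  moreover have "E (last (ps @ qs)) (hd (ps @ qs))"
    using geodesicD[OF ps] geodesicD[OF qs] ca edge_sym by auto
  ultimately have "length (ps @ qs) < 3" using no_cycle by fastforce
  then have "length ps = 1" "length qs = 1" using geodesicD(2)[OF ps] geodesicD(2)[OF qs]
    by (auto simp: Suc_le_eq simp flip: length_greater_0_conv)
  then show ?thesis using geodesicD(3,4)[OF ps] geodesicD(3,4)[OF qs]
    by (auto simp: length_Suc_conv)
qed

lemma dist_through_branch_base:
  assumes ca: "E c a" and z: "z \<in> branch c a" and w: "w \<in> V" "w \<notin> branch c a"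
  shows "d w z = d w c + d c z"
proof -
  obtain xs where xs: "geodesic xs w z" using geodesic_exists z branch_subset w by blast
  note g = geodesicD[OF xs]
  obtain i where i: "Suc i < length xs" "xs ! i \<notin> branch c a" "xs ! Suc i \<in> branch c a"
    using list_crossing[of xs "\<lambda>v. v \<in> branch c a"] g w z by auto
  have "E (xs ! Suc i) (xs ! i)" using g(1) i(1) edge_sym by (simp add: walk_def)
  moreover have "xs ! i \<in> V" using g(5) i(1) by auto
  ultimately have "xs ! i = c" using edge_leaving_branch[OF ca i(3)] i(2) by blast
  then show ?thesis using geodesic_nth[OF xs, of i] i(1) g(6) by simp
qed

lemma walk_into_branch:
  assumes ca: "E c a" and w: "walk V E ys"
    and out: "hd ys \<notin> branch c a" and into: "last ys \<in> branch c a"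
  shows "c \<in> set (butlast ys)"
proof -
  obtain i where i: "Suc i < length ys" "ys ! i \<notin> branch c a" "ys ! Suc i \<in> branch c a"
    using list_crossing[of ys "\<lambda>v. v \<in> branch c a"] w out into by (auto simp: walk_def)
  have "E (ys ! Suc i) (ys ! i)" using w i(1) edge_sym by (simp add: walk_def)
  moreover have "ys ! i \<in> V" using w nth_mem[of i ys] i(1) by (auto simp: walk_def)
  ultimately have "ys ! i = c" using edge_leaving_branch[OF ca i(3)] i(2) by blast
  moreover have "i < length (butlast ys)" using i(1) by simp
  ultimately show ?thesis by (metis nth_butlast nth_mem)
qed

lemma exists_branch_containing:
  assumes "c \<in> V" "z \<in> V" "z \<noteq> c"
  obtains b where "E c b" "z \<in> branch c b"
proof -
  obtain xs where xs: "geodesic xs c z" using geodesic_exists assms by blast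
  note g = geodesicD[OF xs]
  have len: "1 < length xs" using g(6) dist_eq_0_iff assms by auto
  then have "E c (xs ! 1)" using g(1,3) by (auto simp: walk_def hd_conv_nth)
  moreover have "d (xs ! 1) z < d c z"
    using geodesic_nth(2)[OF xs, of 1] len g(6) dist_eq_0_iff assms by auto
  moreover have "xs ! 1 \<in> V" using calculation(1) edge_vertices by blast
  ultimately show ?thesis using that assms(2) by (simp add: branch_def)
qed

lemma dist_common_neighbours:
  assumes a: "E c a" and b: "E c b" and ab: "a \<noteq> b"
  shows "d a b = 2"
proof -
  have V: "a \<in> V" "b \<in> V" "c \<in> V" using a b edge_vertices by auto
  have "\<not> E a b"
  proof
    assume "E a b"
    then have "walk V E [a, c, b]" using a b V edge_sym by (simp add: walk_Cons_Cons)
    moreover have "distinct [a, c, b]" using a b ab edge_irrefl by auto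
    ultimately show False using no_cycle[of "[a, c, b]"] \<open>E a b\<close> edge_sym by auto
  qed
  then have "d a b \<noteq> 1" using dist_eq_1_iff V by blast
  moreover have "d a b \<noteq> 0" using dist_eq_0_iff V ab by blast
  moreover have "d a b \<le> d a c + d c b" using dist_triangle V by blast
  moreover have "d a c = 1" "d c b = 1" using a b edge_sym dist_edge by blast+
  ultimately show ?thesis by linarith
qed

lemma dist_outside_branch:
  assumes ca: "E c a" and z: "z \<in> V" "z \<notin> branch c a"
  shows "d a z = d c z + 1"
proof -
  have "d z a = d z c + d c a" using dist_through_branch_base[OF ca branch_root_mem[OF ca] z] .
  moreover have "d z a = d a z" "d z c = d c z" using dist_sym edge_vertices[OF ca] z(1) by auto
  ultimately show ?thesis using dist_edge[OF ca] by simp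
qed

lemma branches_disjoint:
  assumes a: "E c a" and b: "E c b" and ab: "a \<noteq> b"
  shows "branch c a \<inter> branch c b = {}"
proof -
  have "b \<notin> branch c a"
    using dist_common_neighbours[OF a b ab] dist_edge[OF b] by (simp add: branch_def)
  moreover have "b \<in> V" "d b c = 1" using edge_vertices b edge_sym dist_edge by blast+
  ultimately have "d b z = 1 + d c z" if "z \<in> branch c a" for z
    using dist_through_branch_base[OF a that] by simp
  then show ?thesis by (auto simp: branch_def)
qed

lemma branch_cover: "E c a \<Longrightarrow> z \<in> V \<Longrightarrow> z \<in> branch c a \<or> z \<in> branch a c"
  using dist_outside_branch by (force simp: branch_def)

lemma branch_nested:
  assumes ca: "E c a" and wb: "E w b" and w: "w \<in> branch c a" and c: "c \<notin> branch w b"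
  shows "branch w b \<subseteq> branch c a"
proof
  fix u assume u: "u \<in> branch w b"
  show "u \<in> branch c a"
  proof (rule ccontr)
    assume nu: "u \<notin> branch c a"
    have V: "c \<in> V" "w \<in> V" "u \<in> V" using ca edge_vertices u w branch_subset by blast+
    have "d u w = d u c + d c w" using dist_through_branch_base[OF ca w V(3) nu] .
    moreover have "d c u = d c w + d w u" using dist_through_branch_base[OF wb u V(1) c] .
    moreover have "d u w = d w u" "d u c = d c u" using dist_sym V by auto
    ultimately have "d c w = 0" by linarith
    then have "c = w" using dist_eq_0_iff V by blast
    then show False using w branch_base_not_mem[OF ca] by simp
  qed
qed

lemma geodesic_within_branch:
  assumes ca: "E c a" and x: "x \<in> branch c a" and y: "y \<in> branch c a" and xs: "geodesic xs x y"
  shows "set xs \<subseteq> branch c a"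
proof
  fix q assume q: "q \<in> set xs"
  show "q \<in> branch c a"
  proof (rule ccontr)
    assume qn: "q \<notin> branch c a"
    have V: "q \<in> V" "x \<in> V" "y \<in> V" "a \<in> V"
      using q geodesicD(5)[OF xs] x y branch_subset edge_vertices[OF ca] by auto
    have "d q x = d q c + d c x" using dist_through_branch_base[OF ca x V(1) qn] .
    moreover have "d q y = d q c + d c y" using dist_through_branch_base[OF ca y V(1) qn] .
    moreover have "d x q + d q y = d x y" using geodesic_dist_split[OF xs q] .
    moreover have "d x y \<le> d x a + d a y" using dist_triangle V by blast
    moreover have "d a x < d c x" "d a y < d c y" using x y by (auto simp: branch_def)
    moreover have "d q x = d x q" "d x a = d a x" using dist_sym V by auto
    ultimately show False by linarith
  qed
qed

lemma exists_leaf_beyond: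
  assumes v: "v \<in> V" and x: "x \<in> V" "x \<noteq> v"
  obtains l where "leaf V E l" "d v l = d v x + d x l"
proof -
  \<comment> \<open>A vertex beyond x farthest from v has no neighbour other than the one towards v.\<close>
  define Z where "Z = {z \<in> V. d v z = d v x + d x z}"
  have "x \<in> Z" using x dist_self by (simp add: Z_def)
  moreover have "finite Z" using finite_V by (simp add: Z_def)
  ultimately obtain l where lZ: "l \<in> Z" and lmax: "\<And>z. z \<in> Z \<Longrightarrow> d v z \<le> d v l"
    using finite_obtain_maximizer[of Z "d v"] by blast
  have lV: "l \<in> V" and dl: "d v l = d v x + d x l" using lZ by (auto simp: Z_def)
  have "l \<noteq> v" using dl dist_self dist_eq_0_iff v x by force
  then obtain p where p: "E l p" "v \<in> branch l p" using exists_branch_containing lV v by metis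
  have "q = p" if q: "E l q" for q
  proof (cases "v \<in> branch l q")
    case True
    then show ?thesis using branches_disjoint[OF p(1) q] p(2) by blast
  next
    case False
    have qV: "q \<in> V" using q edge_vertices by blast
    have "d q v = d l v + 1" using dist_outside_branch[OF q v False] .
    then have far: "d v q = d v l + 1" using dist_sym v lV qV by simp
    have "d v q \<le> d v x + d x q" "d x q \<le> d x l + d l q" using dist_triangle v x lV qV by blast+
    then have "q \<in> Z" using far dl dist_edge[OF q] qV by (simp add: Z_def)
    then show ?thesis using lmax far by fastforce
  qed
  then have "{w \<in> V. E l w} = {p}" using p(1) edge_vertices by blast
  then have "leaf V E l" using lV by (simp add: leaf_def degree_def)
  then show ?thesis using that dl by blast
qed

lemma major_if_three_neighbours:
  assumes "E v a" "E v b" "E v c" "a \<noteq> b" "a \<noteq> c" "b \<noteq> c"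
  shows "major V E v"
proof -
  have "{a, b, c} \<subseteq> {w \<in> V. E v w}" using assms edge_vertices by auto
  then have "card {a, b, c} \<le> degree V E v"
    unfolding degree_def using finite_V by (intro card_mono) auto
  then show ?thesis using assms edge_vertices by (simp add: major_def)
qed

lemma branch_subset_resolving_set:
  assumes ca: "E c a" and x: "x \<in> V" and y: "y \<in> V" "y \<notin> branch c a"
    and closer: "d x a \<le> d y c"
  shows "branch c a \<subseteq> resolving_set V E x y"
proof
  fix z assume z: "z \<in> branch c a"
  have "d x z \<le> d x a + d a z" using dist_triangle x z branch_subset edge_vertices[OF ca] by blast
  moreover have "d a z < d c z" using z by (simp add: branch_def)
  moreover have "d y z = d y c + d c z" using dist_through_branch_base[OF ca z y] .
  ultimately have "d x z \<noteq> d y z" using closer by linarith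
  then show "z \<in> resolving_set V E x y" using z branch_subset by (auto simp: resolving_set_def)
qed

lemma resolving_set_commute: "resolving_set V E x y = resolving_set V E y x"
  by (auto simp: resolving_set_def)

(* The branches at the middle of a geodesic from x to y: the two sides of the middle edge if
   d x y is odd, two branches at the middle vertex if it is even. *)
lemma geodesic_middle_branches:
  assumes x: "x \<in> V" and y: "y \<in> V" and xy: "x \<noteq> y"
  obtains c1 a1 c2 a2 where "E c1 a1" "E c2 a2"
    "branch c1 a1 \<subseteq> resolving_set V E x y" "branch c2 a2 \<subseteq> resolving_set V E x y"
    "(c1 = a2 \<and> c2 = a1) \<or> (c1 = c2 \<and> a1 \<noteq> a2)"
proof -
  define m where "m = d x y"
  have m: "1 \<le> m" using dist_eq_0_iff x y xy unfolding m_def by (metis less_one not_less)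
  obtain p where p: "geodesic p x y" using geodesic_exists x y by blast
  have len: "length p = Suc m" using geodesicD(6)[OF p] by (simp add: m_def)
  define i where "i = (m - 1) div 2"
  define j where "j = m - i"
  have ij: "2 * i < m" "m < 2 * j" "j \<le> m" "j = Suc i \<or> j = Suc (Suc i)"
    using m unfolding i_def j_def by presburger+
  have pV: "p ! k \<in> V" if "k \<le> m" for k
    using geodesicD(5)[OF p] that len by (auto intro: nth_mem)
  have step: "E (p ! k) (p ! Suc k)" if "k < m" for k
    using geodesicD(1)[OF p] that len by (simp add: walk_def)
  have px: "d x (p ! k) = k" and py: "d (p ! k) y = m - k" if "k \<le> m" for k
    using geodesic_nth[OF p, of k] that len by (auto simp: m_def)
  have e1: "E (p ! Suc i) (p ! i)" using step[of i] ij edge_sym by simp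
  have e2: "E (p ! (j - 1)) (p ! j)" using step[of "j - 1"] ij by (cases j) auto
  have "y \<notin> branch (p ! Suc i) (p ! i)"
    using py[of i] py[of "Suc i"] ij dist_sym y pV[of i] pV[of "Suc i"] by (simp add: branch_def)
  moreover have "d x (p ! i) \<le> d y (p ! Suc i)"
    using px[of i] py[of "Suc i"] ij dist_sym y pV[of "Suc i"] by simp
  ultimately have r1: "branch (p ! Suc i) (p ! i) \<subseteq> resolving_set V E x y"
    using branch_subset_resolving_set[OF e1 x y] by blast
  have "x \<notin> branch (p ! (j - 1)) (p ! j)"
    using px[of j] px[of "j - 1"] ij dist_sym[OF x pV[of j]] dist_sym[OF x pV[of "j - 1"]]
    by (auto simp: branch_def)
  moreover have "d y (p ! j) \<le> d x (p ! (j - 1))"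
    using py[of j] px[of "j - 1"] ij dist_sym y pV[of j] by auto
  ultimately have r2: "branch (p ! (j - 1)) (p ! j) \<subseteq> resolving_set V E x y"
    using branch_subset_resolving_set[OF e2 y x] resolving_set_commute by blast
  have "p ! i \<noteq> p ! j" if "j = Suc (Suc i)"
    using geodesic_distinct[OF p] len ij that by (simp add: nth_eq_iff_index_eq)
  then have "(p ! Suc i = p ! j \<and> p ! (j - 1) = p ! i) \<or> (p ! Suc i = p ! (j - 1) \<and> p ! i \<noteq> p ! j)"
    using ij(4) by auto
  then show ?thesis using that e1 e2 r1 r2 by blast
qed

(* A leg of a major vertex v, i.e. the path from v to one of its terminal vertices, is
   represented by its first vertex a after v; the rest of the leg is branch v a. *)
definition legs :: "'a \<Rightarrow> 'a set" where
  "legs v = {a. E v a \<and> (\<forall>z\<in>branch v a. \<not> major V E z)}"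

definition hubs :: "'a set" where
  "hubs = {v. major V E v \<and> 2 \<le> card (legs v)}"

definition leg_starts :: "'a set" where
  "leg_starts = (\<Union>v\<in>hubs. legs v)"

definition leg_vertices :: "'a set" where
  "leg_vertices = (\<Union>v\<in>hubs. \<Union>a\<in>legs v. branch v a)"

lemma legs_subset: "legs v \<subseteq> V"
  using edge_vertices by (auto simp: legs_def)

lemma finite_legs: "finite (legs v)"
  using finite_subset[OF legs_subset finite_V] .

lemma finite_hubs: "finite hubs"
  using finite_subset[of hubs V] finite_V by (auto simp: hubs_def major_def)

lemma leg_starts_subset: "leg_starts \<subseteq> V"
  using legs_subset by (auto simp: leg_starts_def)

lemma finite_leg_starts: "finite leg_starts"
  using finite_subset[OF leg_starts_subset finite_V] .

lemma leg_vertices_subset: "leg_vertices \<subseteq> V"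
  using branch_subset by (auto simp: leg_vertices_def)

lemma two_le_card_branches_avoiding:
  assumes w: "major V E w" and c: "c \<in> V"
  shows "2 \<le> card {b \<in> V. E w b \<and> c \<notin> branch w b}" (is "_ \<le> card ?N'")
proof -
  define N where "N = {b \<in> V. E w b}"
  have sub: "?N' \<subseteq> N" and fin: "finite N" using finite_V by (auto simp: N_def)
  have "\<forall>b1\<in>N - ?N'. \<forall>b2\<in>N - ?N'. b1 = b2"
    using branches_disjoint by (auto simp: N_def)
  then have "card (N - ?N') \<le> 1" using fin by (simp add: card_le_Suc0_iff_eq)
  moreover have "card (N - ?N') = card N - card ?N'"
    using card_Diff_subset[OF finite_subset[OF sub fin] sub] .
  moreover have "3 \<le> card N" using w by (simp add: major_def degree_def N_def)
  ultimately show ?thesis by arith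
qed

lemma legs_of_farthest_major:
  assumes ca: "E c a" and w: "w \<in> branch c a"
    and farthest: "\<And>u. u \<in> branch c a \<Longrightarrow> major V E u \<Longrightarrow> d c u \<le> d c w"
    and wb: "E w b" and cb: "c \<notin> branch w b"
  shows "b \<in> legs w"
proof -
  have "\<not> major V E z" if z: "z \<in> branch w b" for z
  proof
    assume "major V E z"
    then have "d c z \<le> d c w" using farthest branch_nested[OF ca wb w cb] z by blast
    moreover have "d c z = d c w + d w z"
      using dist_through_branch_base[OF wb z _ cb] edge_vertices[OF ca] by blast
    moreover have "z \<noteq> w" using z branch_base_not_mem[OF wb] by blast
    then have "d w z \<noteq> 0" using dist_eq_0_iff edge_vertices[OF wb] z branch_subset by blast
    ultimately show False by linarith
  qed
  then show ?thesis using wb by (simp add: legs_def)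
qed

lemma branch_with_major_has_two_leg_starts:
  assumes ca: "E c a" and w0: "w0 \<in> branch c a" "major V E w0"
  obtains b b' where "b \<noteq> b'" "b \<in> leg_starts \<inter> branch c a" "b' \<in> leg_starts \<inter> branch c a"
proof -
  define M where "M = {w \<in> branch c a. major V E w}"
  have "finite M" "M \<noteq> {}" using finite_branch w0 by (auto simp: M_def)
  then obtain w where "w \<in> M" and farthest: "\<And>u. u \<in> M \<Longrightarrow> d c u \<le> d c w"
    using finite_obtain_maximizer by blast
  then have w: "w \<in> branch c a" "major V E w" by (auto simp: M_def)
  define N where "N = {b \<in> V. E w b \<and> c \<notin> branch w b}"
  have N_legs: "N \<subseteq> legs w"
    using legs_of_farthest_major[OF ca w(1)] farthest by (auto simp: N_def M_def)
  have N2: "2 \<le> card N"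
    using two_le_card_branches_avoiding[OF w(2)] edge_vertices[OF ca] by (simp add: N_def)
  then have "w \<in> hubs" using w(2) card_mono[OF finite_legs N_legs] by (simp add: hubs_def)
  then have "N \<subseteq> leg_starts" using N_legs by (auto simp: leg_starts_def)
  moreover have "N \<subseteq> branch c a"
    using branch_nested[OF ca _ w(1)] branch_root_mem by (auto simp: N_def)
  moreover obtain b b' where "b \<in> N" "b' \<in> N" "b \<noteq> b'"
    using N2 two_le_card_iff finite_subset[OF N_legs finite_legs] by blast
  ultimately show ?thesis using that by blast
qed

lemma leg_starts_of_major_free_branches:
  assumes a1: "E c a1" and a2: "E c a2" and a12: "a1 \<noteq> a2"
    and free1: "\<forall>z \<in> branch c a1. \<not> major V E z" and free2: "\<forall>z \<in> branch c a2. \<not> major V E z"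
    and w0: "major V E w0"
  shows "a1 \<in> leg_starts" "a2 \<in> leg_starts"
proof -
  have legs: "a1 \<in> legs c" "a2 \<in> legs c" using a1 a2 free1 free2 by (auto simp: legs_def)
  have "major V E c"
  proof (rule ccontr)
    assume "\<not> major V E c"
    then have "c \<in> V" "w0 \<in> V" "w0 \<noteq> c" using w0 a1 edge_vertices by (auto simp: major_def)
    then obtain b where b: "E c b" "w0 \<in> branch c b" by (rule exists_branch_containing)
    have "a1 \<noteq> b" "a2 \<noteq> b" using b(2) free1 free2 w0 by auto
    then show False using major_if_three_neighbours[OF a1 a2 b(1) a12] \<open>\<not> major V E c\<close> by blast
  qed
  moreover have "2 \<le> card (legs c)" using legs a12 two_le_card_iff finite_legs by blast
  ultimately show "a1 \<in> leg_starts" "a2 \<in> leg_starts"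
    using legs by (auto simp: hubs_def leg_starts_def)
qed

lemma two_le_card_leg_starts_resolving:
  assumes x: "x \<in> V" and y: "y \<in> V" and xy: "x \<noteq> y" and w0: "major V E w0"
  shows "2 \<le> card (leg_starts \<inter> resolving_set V E x y)"
proof -
  let ?R = "resolving_set V E x y"
  have fin: "finite (leg_starts \<inter> ?R)" using finite_leg_starts by blast
  have two: "2 \<le> card (leg_starts \<inter> ?R)"
    if "b \<noteq> b'" "b \<in> leg_starts \<inter> ?R" "b' \<in> leg_starts \<inter> ?R" for b b'
    using that by (auto simp: two_le_card_iff[OF fin])
  obtain c1 a1 c2 a2 where e: "E c1 a1" "E c2 a2"
    and r: "branch c1 a1 \<subseteq> ?R" "branch c2 a2 \<subseteq> ?R"
    and middle: "(c1 = a2 \<and> c2 = a1) \<or> (c1 = c2 \<and> a1 \<noteq> a2)"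
    by (rule geodesic_middle_branches[OF x y xy])
  consider (major1) z where "z \<in> branch c1 a1" "major V E z"
    | (major2) z where "z \<in> branch c2 a2" "major V E z"
    | (free) "\<forall>z \<in> branch c1 a1. \<not> major V E z" "\<forall>z \<in> branch c2 a2. \<not> major V E z"
    by blast
  then show ?thesis
  proof cases
    case major1
    obtain b b' where "b \<noteq> b'" "b \<in> leg_starts \<inter> branch c1 a1" "b' \<in> leg_starts \<inter> branch c1 a1"
      by (rule branch_with_major_has_two_leg_starts[OF e(1) major1])
    then show ?thesis using r(1) two by blast
  next
    case major2
    obtain b b' where "b \<noteq> b'" "b \<in> leg_starts \<inter> branch c2 a2" "b' \<in> leg_starts \<inter> branch c2 a2"
      by (rule branch_with_major_has_two_leg_starts[OF e(2) major2])
    then show ?thesis using r(2) two by blast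
  next
    case free
    have "w0 \<in> branch c1 a1 \<or> w0 \<in> branch a1 c1"
      using branch_cover[OF e(1)] w0 by (simp add: major_def)
    then have "\<not> (c1 = a2 \<and> c2 = a1)" using free w0 by blast
    then have c: "c1 = c2" and a12: "a1 \<noteq> a2" using middle by auto
    then have "a1 \<in> leg_starts" "a2 \<in> leg_starts"
      using leg_starts_of_major_free_branches[OF e(1) _ a12 free(1) _ w0] e(2) free(2) by simp_all
    moreover have "a1 \<in> ?R" "a2 \<in> ?R" using r branch_root_mem e by auto
    ultimately show ?thesis using two a12 by blast
  qed
qed

definition leg_weight :: "'a \<Rightarrow> real" where
  "leg_weight z = (if z \<in> leg_starts then 1 / 2 else 0)"

lemma sum_leg_weight: "finite S \<Longrightarrow> sum leg_weight S = card (S \<inter> leg_starts) / 2"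
  unfolding leg_weight_def by (simp add: sum.If_cases Int_def)

lemma leg_weight_resolving:
  assumes "major V E w0"
  shows "resolving_function V E leg_weight"
  unfolding resolving_function_def
proof (intro conjI ballI impI)
  fix x y assume "x \<in> V" "y \<in> V" "x \<noteq> y"
  then have "2 \<le> card (resolving_set V E x y \<inter> leg_starts)"
    using two_le_card_leg_starts_resolving assms by (simp add: Int_commute)
  moreover have "finite (resolving_set V E x y)" using finite_V by (simp add: resolving_set_def)
  ultimately show "1 \<le> sum leg_weight (resolving_set V E x y)" by (simp add: sum_leg_weight)
qed (auto simp: leg_weight_def)

lemma frac_dim_le_half_leg_starts:
  assumes "major V E w0"
  shows "frac_dim V E \<le> card leg_starts / 2"
  using frac_dim_le_sum[OF leg_weight_resolving[OF assms]] sum_leg_weight[OF finite_V]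
    leg_starts_subset by (simp add: Int_absorb1)

lemma resolving_set_neighbours_subset:
  assumes "E v a" "E v a'"
  shows "resolving_set V E a a' \<subseteq> branch v a \<union> branch v a'"
proof
  fix z assume z: "z \<in> resolving_set V E a a'"
  show "z \<in> branch v a \<union> branch v a'"
  proof (rule ccontr)
    assume "z \<notin> branch v a \<union> branch v a'"
    then have "d a z = d a' z"
      using dist_outside_branch[OF assms(1)] dist_outside_branch[OF assms(2)] z
      by (simp add: resolving_set_def)
    then show False using z by (simp add: resolving_set_def)
  qed
qed

lemma half_card_legs_le_sum:
  assumes g: "resolving_function V E g" and v: "v \<in> hubs"
  shows "card (legs v) / 2 \<le> (\<Sum>a\<in>legs v. sum g (branch v a))"
proof (rule half_card_le_sum[OF finite_legs])
  show "2 \<le> card (legs v)" using v by (simp add: hubs_def)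
  fix a a' assume a: "a \<in> legs v" "a' \<in> legs v" "a \<noteq> a'"
  have e: "E v a" "E v a'" using a by (auto simp: legs_def)
  have g_nonneg: "0 \<le> g z" if "z \<in> branch v a \<union> branch v a'" for z
    using g that branch_subset by (auto simp: resolving_function_def)
  have "1 \<le> sum g (resolving_set V E a a')"
    using g a(3) e edge_vertices by (simp add: resolving_function_def)
  also have "\<dots> \<le> sum g (branch v a \<union> branch v a')"
    using resolving_set_neighbours_subset[OF e] finite_branch g_nonneg by (intro sum_mono2) auto
  also have "\<dots> = sum g (branch v a) + sum g (branch v a')"
    using branches_disjoint[OF e a(3)] finite_branch by (intro sum.union_disjoint) auto
  finally show "1 \<le> sum g (branch v a) + sum g (branch v a')" .
qed

lemma leg_branches_disjoint:
  assumes v: "major V E v" "major V E v'" "v \<noteq> v'" and a: "a \<in> legs v" "a' \<in> legs v'"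
  shows "branch v a \<inter> branch v' a' = {}"
proof (rule ccontr)
  assume "branch v a \<inter> branch v' a' \<noteq> {}"
  then obtain z where z: "z \<in> branch v a" "z \<in> branch v' a'" by blast
  have e: "E v a" "E v' a'" and out: "v' \<notin> branch v a" "v \<notin> branch v' a'"
    using a v by (auto simp: legs_def)
  have V: "v \<in> V" "v' \<in> V" using v by (auto simp: major_def)
  have "d v' z = d v' v + d v z" using dist_through_branch_base[OF e(1) z(1) V(2) out(1)] .
  moreover have "d v z = d v v' + d v' z" using dist_through_branch_base[OF e(2) z(2) V(1) out(2)] .
  moreover have "d v v' = d v' v" using dist_sym V by blast
  ultimately have "d v v' = 0" by linarith
  then show False using dist_eq_0_iff V v(3) by blast
qed

lemma half_card_leg_starts_le_sum:
  assumes g: "resolving_function V E g"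
  shows "card leg_starts / 2 \<le> sum g leg_vertices"
proof -
  have hub_major: "\<And>v. v \<in> hubs \<Longrightarrow> major V E v" by (simp add: hubs_def)
  have hubs_disj: "(\<Union>a\<in>legs v. branch v a) \<inter> (\<Union>a\<in>legs v'. branch v' a) = {}"
    if "v \<in> hubs" "v' \<in> hubs" "v \<noteq> v'" for v v'
    using leg_branches_disjoint[OF hub_major[OF that(1)] hub_major[OF that(2)] that(3)] by blast
  have legs_disj: "legs v \<inter> legs v' = {}" if "v \<in> hubs" "v' \<in> hubs" "v \<noteq> v'" for v v'
  proof -
    have "a \<in> (\<Union>a\<in>legs v. branch v a)" if "a \<in> legs v" for a v
      using that branch_root_mem by (auto simp: legs_def)
    then show ?thesis using hubs_disj[OF that] by blast
  qed
  have "card leg_starts = (\<Sum>v\<in>hubs. card (legs v))"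
    unfolding leg_starts_def
      by (rule card_UN_disjoint) (use finite_hubs finite_legs legs_disj in auto)
  then have "card leg_starts / 2 = (\<Sum>v\<in>hubs. card (legs v) / 2)"
    by (simp add: sum_divide_distrib)
  also have "\<dots> \<le> (\<Sum>v\<in>hubs. \<Sum>a\<in>legs v. sum g (branch v a))"
    using half_card_legs_le_sum[OF g] by (rule sum_mono)
  also have "\<dots> = (\<Sum>v\<in>hubs. sum g (\<Union>a\<in>legs v. branch v a))"
  proof (rule sum.cong[OF refl])
    fix v assume "v \<in> hubs"
    show "(\<Sum>a\<in>legs v. sum g (branch v a)) = sum g (\<Union>a\<in>legs v. branch v a)"
      by (rule sum.UNION_disjoint[symmetric])
        (use finite_legs finite_branch branches_disjoint in \<open>auto simp: legs_def\<close>)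
  qed
  also have "\<dots> = sum g leg_vertices"
    unfolding leg_vertices_def
    by (rule sum.UNION_disjoint[symmetric])
      (use finite_hubs finite_branch finite_legs hubs_disj in auto)
  finally show ?thesis .
qed

lemma min_resolving_vanishes_outside_leg_vertices:
  assumes w0: "major V E w0" and g: "min_resolving_function V E g" and z: "z \<in> V - leg_vertices"
  shows "g z = 0"
proof -
  have res: "resolving_function V E g" and min: "sum g V = frac_dim V E"
    using g by (auto simp: min_resolving_function_def)
  have nonneg: "\<forall>z\<in>V - leg_vertices. 0 \<le> g z" using res by (simp add: resolving_function_def)
  have "sum g V = sum g (V - leg_vertices) + sum g leg_vertices"
    using sum.subset_diff[OF leg_vertices_subset finite_V] .
  moreover have "0 \<le> sum g (V - leg_vertices)" using nonneg by (intro sum_nonneg) blast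
  ultimately have "sum g (V - leg_vertices) = 0"
    using min frac_dim_le_half_leg_starts[OF w0] half_card_leg_starts_le_sum[OF res] by linarith
  then show ?thesis using sum_nonneg_eq_0_iff[of "V - leg_vertices" g] finite_V nonneg z by blast
qed

lemma leg_contains_terminal:
  assumes v: "major V E v" and a: "a \<in> legs v" and x: "x \<in> branch v a"
  obtains l where "terminal_of V E v l" "l \<in> branch v a"
proof -
  have e: "E v a" and free: "\<forall>z\<in>branch v a. \<not> major V E z" using a by (auto simp: legs_def)
  have vV: "v \<in> V" and xV: "x \<in> V" and xv: "x \<noteq> v"
    using v x branch_subset branch_base_not_mem[OF e] by (auto simp: major_def)
  obtain l where leaf: "leaf V E l" and beyond: "d v l = d v x + d x l"
    using exists_leaf_beyond[OF vV xV xv] .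
  have lV: "l \<in> V" using leaf by (simp add: leaf_def)
  have "d v x \<noteq> 0" using dist_eq_0_iff vV xV xv by blast
  have l_in: "l \<in> branch v a"
  proof (rule ccontr)
    assume "l \<notin> branch v a"
    then have "d l x = d l v + d v x" using dist_through_branch_base[OF e x lV] by blast
    moreover have "d l x = d x l" "d l v = d v l" using dist_sym lV xV vV by auto
    ultimately show False using beyond \<open>d v x \<noteq> 0\<close> by linarith
  qed
  have "terminal_of V E v l"
    unfolding terminal_of_def
  proof (intro conjI allI impI)
    fix w assume w: "major V E w \<and> w \<noteq> v"
    then have wV: "w \<in> V" and "w \<notin> branch v a" using free by (auto simp: major_def)
    then have "d w l = d w v + d v l" using dist_through_branch_base[OF e l_in] by blast
    moreover have "d w v \<noteq> 0" using dist_eq_0_iff wV vV w by blast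
    moreover have "d l w = d w l" "d l v = d v l" using dist_sym lV wV vV by auto
    ultimately show "d l v < d l w" by linarith
  qed (use v leaf in auto)
  then show ?thesis using that l_in by blast
qed

lemma card_legs_le_ter:
  assumes v: "major V E v"
  shows "card (legs v) \<le> ter V E v"
proof -
  have e: "E v a" if "a \<in> legs v" for a using that by (simp add: legs_def)
  have "\<exists>l. terminal_of V E v l \<and> l \<in> branch v a" if "a \<in> legs v" for a
    using leg_contains_terminal[OF v that branch_root_mem[OF e[OF that]]] by blast
  then obtain f where f: "\<And>a. a \<in> legs v \<Longrightarrow> terminal_of V E v (f a) \<and> f a \<in> branch v a"
    by metis
  have "inj_on f (legs v)"
  proof (rule inj_onI, rule ccontr)
    fix a a' assume a: "a \<in> legs v" "a' \<in> legs v" "f a = f a'" "a \<noteq> a'"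
    then have "f a \<in> branch v a \<inter> branch v a'" using f[OF a(1)] f[OF a(2)] by simp
    then show False using branches_disjoint[OF e[OF a(1)] e[OF a(2)] a(4)] by blast
  qed
  moreover have "f ` legs v \<subseteq> {l. terminal_of V E v l}" using f by blast
  moreover have "finite {l. terminal_of V E v l}"
    using finite_subset[OF _ finite_V] by (auto simp: terminal_of_def leaf_def)
  ultimately show ?thesis unfolding ter_def by (rule card_inj_on_le)
qed

lemma terminal_of_in_leg_imp_eq:
  assumes v: "major V E v" and a: "a \<in> legs v" and l: "l \<in> branch v a"
    and t: "terminal_of V E u l"
  shows "u = v"
proof (rule ccontr)
  assume uv: "u \<noteq> v"
  have e: "E v a" and u: "major V E u" "u \<notin> branch v a"
    using a t by (auto simp: legs_def terminal_of_def)
  have V: "u \<in> V" "v \<in> V" "l \<in> V" using u v l branch_subset by (auto simp: major_def)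
  have "d u l = d u v + d v l" using dist_through_branch_base[OF e l V(1) u(2)] .
  moreover have "d l u < d l v" using t v uv by (simp add: terminal_of_def)
  moreover have "d l u = d u l" "d l v = d v l" using dist_sym V by auto
  ultimately show False by linarith
qed

lemma path_through_branch_ends_in_branch:
  assumes ca: "E c a" and p: "path V E u l xs" and u: "u \<notin> branch c a"
    and x: "x \<in> set xs" "x \<in> branch c a"
  shows "l \<in> branch c a"
proof (rule ccontr)
  assume l: "l \<notin> branch c a"
  have w: "walk V E xs" and dist: "distinct xs" and hd: "hd xs = u" and last: "last xs = l"
    using p by (auto simp: path_def)
  obtain k where k: "k < length xs" "xs ! k = x" using x(1) by (auto simp: in_set_conv_nth)
  have tk: "take (Suc k) xs = take k xs @ [x]" using k by (simp add: take_Suc_conv_app_nth)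
  have "hd (take (Suc k) xs) \<notin> branch c a" using hd u by simp
  moreover have "last (take (Suc k) xs) \<in> branch c a" using tk x(2) by simp
  ultimately have "c \<in> set (butlast (take (Suc k) xs))"
    using walk_into_branch[OF ca walk_take[OF w, of "Suc k"]] by simp
  then have before: "c \<in> set (take k xs)" using tk by simp
  have "c \<in> set (butlast (rev (drop k xs)))"
    using walk_into_branch[OF ca walk_rev[OF edge_sym walk_drop[OF w k(1)]]] last l x(2) k
    by (simp add: hd_rev last_rev hd_drop_conv_nth)
  then have after: "c \<in> set (drop (Suc k) xs)" by (simp add: butlast_rev drop_Suc tl_drop)
  show False using set_take_disj_set_drop_if_distinct[OF dist, of k "Suc k"] before after by auto
qed

lemma major_notin_leg_vertices: "major V E x \<Longrightarrow> x \<notin> leg_vertices"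
  by (auto simp: leg_vertices_def legs_def)

lemma interior_deg2_notin_leg_vertices:
  assumes x: "interior_deg2 V E x"
  shows "x \<notin> leg_vertices"
proof
  assume "x \<in> leg_vertices"
  then obtain v a where v: "major V E v" and a: "a \<in> legs v" and xa: "x \<in> branch v a"
    by (auto simp: leg_vertices_def hubs_def)
  have e: "E v a" and free: "\<forall>z\<in>branch v a. \<not> major V E z" using a by (auto simp: legs_def)
  obtain l where t: "terminal_of V E v l" and l: "l \<in> branch v a"
    using leg_contains_terminal[OF v a xa] .
  obtain xs where xs: "geodesic xs x l" using geodesic_exists xa l branch_subset by blast
  have "path V E x l xs" "length xs = Suc (d x l)"
    using geodesicD[OF xs] geodesic_distinct[OF xs] by (auto simp: path_def)
  then have "\<exists>z\<in>set xs. major V E z" using x t unfolding interior_deg2_def by blast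
  then obtain z where "z \<in> set xs" "major V E z" by blast
  then show False using geodesic_within_branch[OF e xa l xs] free by blast
qed

lemma T_sub_of_M1_notin_leg_vertices:
  assumes v0: "v0 \<in> M1 V E" and x: "x \<in> T_sub V E v0"
  shows "x \<notin> leg_vertices"
proof
  assume x_leg: "x \<in> leg_vertices"
  then obtain v a where v: "v \<in> hubs" and a: "a \<in> legs v" and xa: "x \<in> branch v a"
    by (auto simp: leg_vertices_def)
  have vm: "major V E v" and e: "E v a" and free: "\<forall>z\<in>branch v a. \<not> major V E z"
    using v a by (auto simp: hubs_def legs_def)
  have v0m: "major V E v0" and ter1: "ter V E v0 = 1" using v0 by (auto simp: M1_def ext_major_def)
  then have "x \<noteq> v0" using x_leg major_notin_leg_vertices by blast
  then obtain l xs where t: "terminal_of V E v0 l" and p: "path V E v0 l xs" and "x \<in> set xs"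
    using x by (auto simp: T_sub_def)
  then have "l \<in> branch v a"
    using path_through_branch_ends_in_branch[OF e p _ _ xa] free v0m by blast
  then have "v0 = v" using terminal_of_in_leg_imp_eq[OF vm a _ t] by blast
  then show False using card_legs_le_ter[OF vm] v ter1 by (simp add: hubs_def)
qed

end

lemma tree_graph_if_is_tree: "is_tree V E \<Longrightarrow> tree_graph V E"
  by unfold_locales (auto simp: is_tree_def)

theorem corollary3p14:
  fixes V :: "'a set" and E :: "'a \<Rightarrow> 'a \<Rightarrow> bool" and g :: "'a \<Rightarrow> real" and x :: 'a
  assumes "is_tree V E"
    and "ex_num V E \<ge> 1"
    and "min_resolving_function V E g"
    and "x \<in> V"
    and "major V E x \<or> interior_deg2 V E x \<or> (\<exists>v\<in>M1 V E. x \<in> T_sub V E v)"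
  shows "g x = 0"
proof -
  interpret tree_graph V E using assms(1) by (rule tree_graph_if_is_tree)
  have "ext_major V E \<noteq> {}" using assms(2) by (auto simp: ex_num_def)
  then obtain w0 where "major V E w0" by (auto simp: ext_major_def)
  moreover have "x \<notin> leg_vertices"
    using assms(5) major_notin_leg_vertices interior_deg2_notin_leg_vertices
      T_sub_of_M1_notin_leg_vertices by blast
  ultimately show ?thesis
    using min_resolving_vanishes_outside_leg_vertices assms(3,4) by blast
qed

end
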